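(* In a finite dynamic game as described in the context, if $K^i$ is unilaterally sufficient information for player $i$, then for every Bayes–Nash equilibrium behavioral strategy profile $g=(g^j)_{j\in\mathcal{I}}$ there exists a $K^i$-based strategy $\rho^i$ such that $(\rho^i,g^{-i})$ is a Bayes–Nash equilibrium and $J^j(\rho^i,g^{-i})=J^j(g)$ for all $j\in\mathcal{I}$.
   Context: Game model: finite set of players $\mathcal{I}$, times $\mathcal{T}=\{1,\dots,T\}$. At time $t$ each player $i$ takes action $U_t^i\in\mathcal{U}_t^i$, obtains reward $R_t^i\in[-1,1]$ and learns new information $Z_t^i\in\mathcal{Z}_t^i$. There is a state $X_t\in\mathcal{X}_t$ with $(X_{t+1},Z_t,R_t)=f_t(X_t,U_t,W_t)$ for fixed functions $f_t$. Primitive random variables $(X_1,H_1)$ and $W_1,\dots,W_T$ are mutually independent with commonly known distributions. All sets are finite. Perfect recall: $H_t^i=(H_1^i,Z_{1:t-1}^i)\in\mathcal{H}_t^i$, and $U_t^i$ is a component of $Z_t^i$. Behavioral strategy $g_t^i:\mathcal{H}_t^i\to\Delta(\mathcal{U}_t^i)$; payoff $J^j(g)=\mathbb{E}^g[\sum_t R_t^j]$. A profile $g$ is a Bayes–Nash equilibrium if $J^j(g)\ge J^j(\tilde g^j,g^{-j})$ for all $j$ and all behavioral $\tilde g^j$. A realization is admissible under $g$ if it has positive probability under $g$. Compression: $K_1^i=\iota_1^i(H_1^i)$, $K_t^i=\iota_t^i(K_{t-1}^i,Z_{t-1}^i)$ for fixed maps, finite value sets $\mathcal{K}_t^i$; $k_t^i$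 is the compression of $h_t^i$; a $K^i$-based strategy has $\rho_t^i:\mathcal{K}_t^i\to\Delta(\mathcal{U}_t^i)$. Unilaterally sufficient information (USI): $K^i$ is USI for player $i$ if there exist $F_t^{i,g^i}:\mathcal{K}_t^i\to\Delta(\mathcal{H}_t^i)$ depending only on $g^i$ and $\Phi_t^{i,g^{-i}}:\mathcal{K}_t^i\to\Delta(\mathcal{X}_t\times\mathcal{H}_t^{-i})$ depending only on $g^{-i}$ with $\Pr^g(x_t,h_t\mid k_t^i)=F_t^{i,g^i}(h_t^i\mid k_t^i)\Phi_t^{i,g^{-i}}(x_t,h_t^{-i}\mid k_t^i)$ for all behavioral profiles $g$, all $t$, all $k_t^i$ admissible under $g$ (with $x_t,h_t^i,h_t^{-i}$ ranging independently; the left side is $0$ if they disagree on shared components). *)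

theory Defs
  imports "HOL-Probability.Probability"
begin

text \<open>Times are indexed 0-based: the paper's time t in {1..T}
  corresponds to index t-1 < T.  A history H_t^i = (H_1^i, Z_{1:t-1}^i) is represented
  as a pair (initial private information, list of observations so far).\<close>

type_synonym ('h,'z) hist = "'h \<times> 'z list"

record ('i,'x,'h,'u,'z,'w) game =
  horizon :: nat
  init    :: "('x \<times> ('i \<Rightarrow> 'h)) pmf"
  noise   :: "nat \<Rightarrow> 'w pmf"
  dyn     :: "nat \<Rightarrow> 'x \<Rightarrow> ('i \<Rightarrow> 'u) \<Rightarrow> 'w \<Rightarrow> 'x \<times> ('i \<Rightarrow> 'z) \<times> ('i \<Rightarrow> real)"
                                                   \<comment> \<open>f_t : (X_t,U_t,W_t) to (X_{t+1},Z_t,R_t)\<close>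
  acts    :: "nat \<Rightarrow> 'i \<Rightarrow> 'u set"
  act_of  :: "nat \<Rightarrow> 'i \<Rightarrow> 'z \<Rightarrow> 'u"              \<comment> \<open>U_t^i is a component of Z_t^i\<close>

definition valid_game :: "('i,'x,'h,'u,'z,'w) game \<Rightarrow> bool" where
  "valid_game G \<longleftrightarrow>
     (\<forall>t x u w i. t < horizon G \<longrightarrow> (\<forall>j. u j \<in> acts G t j) \<longrightarrow>
        \<bar>snd (snd (dyn G t x u w)) i\<bar> \<le> 1 \<and>
        act_of G t i (fst (snd (dyn G t x u w)) i) = u i)"

type_synonym ('i,'h,'u,'z) profile = "'i \<Rightarrow> nat \<Rightarrow> ('h,'z) hist \<Rightarrow> 'u pmf"

definition joint_act :: "('i::finite \<Rightarrow> 'u pmf) \<Rightarrow> ('i \<Rightarrow> 'u) pmf" where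
  "joint_act p = Pi_pmf UNIV undefined p"

primrec run :: "('i::finite,'x,'h,'u,'z,'w) game \<Rightarrow> ('i,'h,'u,'z) profile \<Rightarrow> nat
      \<Rightarrow> ('x \<times> ('i \<Rightarrow> ('h,'z) hist) \<times> ('i \<Rightarrow> real)) pmf" where
  "run G g 0 = map_pmf (\<lambda>(x, h1). (x, \<lambda>i. (h1 i, []), \<lambda>i. 0)) (init G)"
| "run G g (Suc t) = bind_pmf (run G g t) (\<lambda>(x, H, c).
      bind_pmf (joint_act (\<lambda>i. g i t (H i))) (\<lambda>u.
      bind_pmf (noise G t) (\<lambda>w.
        (case dyn G t x u w of (x', z, r) \<Rightarrow>
           return_pmf (x', \<lambda>i. (fst (H i), snd (H i) @ [z i]), \<lambda>i. c i + r i)))))"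

definition behavioral :: "('i,'x,'h,'u,'z,'w) game \<Rightarrow> ('i,'h,'u,'z) profile \<Rightarrow> bool" where
  "behavioral G g \<longleftrightarrow> (\<forall>i t h. t < horizon G \<longrightarrow> set_pmf (g i t h) \<subseteq> acts G t i)"

definition payoff :: "('i::finite,'x,'h,'u,'z,'w) game \<Rightarrow> ('i,'h,'u,'z) profile \<Rightarrow> 'i \<Rightarrow> real" where
  "payoff G g j = measure_pmf.expectation (run G g (horizon G)) (\<lambda>(x, H, c). c j)"

definition BNE :: "('i::finite,'x,'h,'u,'z,'w) game \<Rightarrow> ('i,'h,'u,'z) profile \<Rightarrow> bool" where
  "BNE G g \<longleftrightarrow> behavioral G g \<and>
     (\<forall>j g'. behavioral G (g(j := g')) \<longrightarrow> payoff G (g(j := g')) j \<le> payoff G g j)"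

primrec kc :: "('i \<Rightarrow> 'h \<Rightarrow> 'k) \<Rightarrow> (nat \<Rightarrow> 'i \<Rightarrow> 'k \<Rightarrow> 'z \<Rightarrow> 'k) \<Rightarrow> 'i \<Rightarrow> 'h \<Rightarrow> 'z list \<Rightarrow> nat \<Rightarrow> 'k" where
  "kc \<iota>0 \<iota> i h1 zs 0 = \<iota>0 i h1"
| "kc \<iota>0 \<iota> i h1 zs (Suc n) = \<iota> n i (kc \<iota>0 \<iota> i h1 zs n) (zs ! n)"

definition compress :: "('i \<Rightarrow> 'h \<Rightarrow> 'k) \<Rightarrow> (nat \<Rightarrow> 'i \<Rightarrow> 'k \<Rightarrow> 'z \<Rightarrow> 'k) \<Rightarrow> 'i \<Rightarrow> ('h,'z) hist \<Rightarrow> 'k" where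
  "compress \<iota>0 \<iota> i h = kc \<iota>0 \<iota> i (fst h) (snd h) (length (snd h))"

definition K_based :: "('i,'x,'h,'u,'z,'w) game \<Rightarrow> 'i \<Rightarrow> (nat \<Rightarrow> 'k \<Rightarrow> 'u pmf) \<Rightarrow> bool" where
  "K_based G i \<rho> \<longleftrightarrow> (\<forall>t k. t < horizon G \<longrightarrow> set_pmf (\<rho> t k) \<subseteq> acts G t i)"

definition kstrat :: "('i \<Rightarrow> 'h \<Rightarrow> 'k) \<Rightarrow> (nat \<Rightarrow> 'i \<Rightarrow> 'k \<Rightarrow> 'z \<Rightarrow> 'k) \<Rightarrow> 'i
     \<Rightarrow> (nat \<Rightarrow> 'k \<Rightarrow> 'u pmf) \<Rightarrow> nat \<Rightarrow> ('h,'z) hist \<Rightarrow> 'u pmf" where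
  "kstrat \<iota>0 \<iota> i \<rho> = (\<lambda>t h. \<rho> t (compress \<iota>0 \<iota> i h))"

definition prob_K :: "('i::finite,'x,'h,'u,'z,'w) game \<Rightarrow> ('i,'h,'u,'z) profile
     \<Rightarrow> ('i \<Rightarrow> 'h \<Rightarrow> 'k) \<Rightarrow> (nat \<Rightarrow> 'i \<Rightarrow> 'k \<Rightarrow> 'z \<Rightarrow> 'k) \<Rightarrow> 'i \<Rightarrow> nat \<Rightarrow> 'k \<Rightarrow> real" where
  "prob_K G g \<iota>0 \<iota> i t k =
     measure_pmf.prob (run G g t) {(x, H, c). compress \<iota>0 \<iota> i (H i) = k}"

definition cond_XH :: "('i::finite,'x,'h,'u,'z,'w) game \<Rightarrow> ('i,'h,'u,'z) profile
     \<Rightarrow> ('i \<Rightarrow> 'h \<Rightarrow> 'k) \<Rightarrow> (nat \<Rightarrow> 'i \<Rightarrow> 'k \<Rightarrow> 'z \<Rightarrow> 'k) \<Rightarrow> 'i \<Rightarrow> nat \<Rightarrow> 'k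
     \<Rightarrow> 'x \<Rightarrow> ('i \<Rightarrow> ('h,'z) hist) \<Rightarrow> real" where
  "cond_XH G g \<iota>0 \<iota> i t k x H =
     measure_pmf.prob (run G g t) {(x', H', c). x' = x \<and> H' = H \<and> compress \<iota>0 \<iota> i (H i) = k}
       / prob_K G g \<iota>0 \<iota> i t k"

text \<open>F depends only on g^i (it receives g i);
  Phi depends only on g^{-i} (it receives the profile with the i-th component erased).
  Phi is a distribution on X_t x H_t^{-i}, represented as a pmf on 'x x ('i => hist)
  of which only the marginal on (x, h^{-i}) is used.\<close>
definition USI :: "('i::finite,'x,'h,'u,'z,'w) game
     \<Rightarrow> ('i \<Rightarrow> 'h \<Rightarrow> 'k) \<Rightarrow> (nat \<Rightarrow> 'i \<Rightarrow> 'k \<Rightarrow> 'z \<Rightarrow> 'k) \<Rightarrow> 'i \<Rightarrow> bool" where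
  "USI G \<iota>0 \<iota> i \<longleftrightarrow>
    (\<exists>(F :: (nat \<Rightarrow> ('h,'z) hist \<Rightarrow> 'u pmf) \<Rightarrow> nat \<Rightarrow> 'k \<Rightarrow> ('h,'z) hist pmf)
      (\<Phi> :: ('i,'h,'u,'z) profile \<Rightarrow> nat \<Rightarrow> 'k \<Rightarrow> ('x \<times> ('i \<Rightarrow> ('h,'z) hist)) pmf).
      \<forall>g. behavioral G g \<longrightarrow>
        (\<forall>t k. t < horizon G \<longrightarrow> prob_K G g \<iota>0 \<iota> i t k > 0 \<longrightarrow>
          (\<forall>x H. cond_XH G g \<iota>0 \<iota> i t k x H =
             pmf (F (g i) t k) (H i) *
             measure_pmf.prob (\<Phi> (g(i := undefined)) t k)
               {(x', H'). x' = x \<and> (\<forall>j. j \<noteq> i \<longrightarrow> H' j = H j)})))"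

end

theory Submission
  imports Defs
begin

text \<open>By unilateral sufficiency, conditionally on K_t^i = k the history H_t^i is independent of
  (X_t, H_t^{-i}) and has a law F_t(k) that depends on g^i alone. Player i's action g^i_t(H_t^i)
  may therefore be replaced by the K^i-based mixture rho_t(k) = sum_h F_t(h | k) g^i_t(h) without
  changing the joint law of (X_t, H_t^{-i}, K_t^i, U_t). This law at time t determines the law of
  (X_{t+1}, H_{t+1}^{-i}, K_{t+1}^i), so by induction on t it is the same under g and under
  (rho^i, g^{-i}), and so is every expected stage reward. Because F does not depend on g^{-i},
  the same holds against any unilateral deviation of another player, so (rho^i, g^{-i}) is again
  an equilibrium; a deviation of player i from it is a deviation from g.\<close>

lemma kc_append: "n \<le> length zs \<Longrightarrow> kc \<iota>0 \<iota> i h (zs @ ys) n = kc \<iota>0 \<iota> i h zs n"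
  by (induction n) (auto simp: nth_append)

lemma compress_snoc:
  "compress \<iota>0 \<iota> i (h, zs @ [z]) = \<iota> (length zs) i (compress \<iota>0 \<iota> i (h, zs)) z"
  by (simp add: compress_def kc_append)

lemma length_hist_run: "s \<in> set_pmf (run G g t) \<Longrightarrow> length (snd (fst (snd s) j)) = t"
  by (induction t arbitrary: s) (auto simp: split_beta)

lemma finite_set_pmf_run:
  fixes G :: "('i::finite, 'x::finite, 'h::finite, 'u::finite, 'z::finite, 'w::finite) game"
  shows "finite (set_pmf (run G g t))"
  by (induction t) (auto simp: split_beta intro!: finite_UN_I)

definition succ_state :: "('i,'x,'h,'u,'z,'w) game \<Rightarrow> nat \<Rightarrow> 'x \<times> ('i \<Rightarrow> ('h,'z) hist) \<times> ('i \<Rightarrow> real)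
    \<Rightarrow> ('i \<Rightarrow> 'u) \<Rightarrow> 'w \<Rightarrow> 'x \<times> ('i \<Rightarrow> ('h,'z) hist) \<times> ('i \<Rightarrow> real)" where
  "succ_state G t s u w = (case dyn G t (fst s) u w of (x', z, r) \<Rightarrow>
      (x', \<lambda>j. (fst (fst (snd s) j), snd (fst (snd s) j) @ [z j]), \<lambda>j. snd (snd s) j + r j))"

lemma run_Suc_succ_state:
  "run G g (Suc t) = bind_pmf (run G g t) (\<lambda>s.
     bind_pmf (joint_act (\<lambda>j. g j t (fst (snd s) j)))
       (\<lambda>u. map_pmf (succ_state G t s u) (noise G t)))"
  by (simp add: succ_state_def map_pmf_def case_prod_unfold)

lemma expectation_bind_pmf_finite:
  fixes f :: "'b \<Rightarrow> real"
  assumes "finite (set_pmf M)" and "\<And>x. x \<in> set_pmf M \<Longrightarrow> finite (set_pmf (N x))"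
  shows "measure_pmf.expectation (bind_pmf M N) f =
           measure_pmf.expectation M (\<lambda>x. measure_pmf.expectation (N x) f)"
proof -
  define S where "S = (\<Union>x\<in>set_pmf M. set_pmf (N x))"
  have "finite S" unfolding S_def using assms by auto
  have inner: "measure_pmf.expectation (N x) f = (\<Sum>y\<in>S. pmf (N x) y * f y)" if "x \<in> set_pmf M" for x
    using that by (subst integral_measure_pmf[OF \<open>finite S\<close>]) (auto simp: S_def)
  have "measure_pmf.expectation (bind_pmf M N) f = (\<Sum>y\<in>S. pmf (bind_pmf M N) y * f y)"
    by (subst integral_measure_pmf[OF \<open>finite S\<close>]) (auto simp: S_def)
  also have "\<dots> = (\<Sum>y\<in>S. (\<Sum>x\<in>set_pmf M. pmf M x * pmf (N x) y) * f y)"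
    by (intro sum.cong refl, subst pmf_bind, subst integral_measure_pmf[OF assms(1)])
       (auto simp: mult.commute)
  also have "\<dots> = (\<Sum>x\<in>set_pmf M. pmf M x * (\<Sum>y\<in>S. pmf (N x) y * f y))"
    by (simp add: sum_distrib_left sum_distrib_right sum.swap[of _ S] mult.assoc)
  also have "\<dots> = measure_pmf.expectation M (\<lambda>x. measure_pmf.expectation (N x) f)"
    by (subst integral_measure_pmf[OF assms(1)]) (auto simp: inner)
  finally show ?thesis .
qed

lemma joint_act_split:
  fixes p :: "'i::finite \<Rightarrow> 'u pmf"
  shows "joint_act p =
    bind_pmf (p i) (\<lambda>y. map_pmf (\<lambda>u. u(i := y)) (Pi_pmf (UNIV - {i}) undefined p))"
proof -
  have "joint_act p = Pi_pmf (insert i (UNIV - {i})) undefined p"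
    by (simp add: joint_act_def insert_absorb)
  then show ?thesis
    by (subst (asm) Pi_pmf_insert') (auto simp: map_pmf_def)
qed

lemma bind_pmf_kernel_eq_mixture:
  fixes M :: "('a \<times> 'b) pmf" and \<kappa> :: "'b \<Rightarrow> 'k"
  assumes cond: "\<And>a b. (a, b) \<in> set_pmf M \<Longrightarrow>
    cond_pmf M {p. \<kappa> (snd p) = \<kappa> b} = pair_pmf (\<Phi> (\<kappa> b)) (F (\<kappa> b))"
  shows "bind_pmf M (\<lambda>(a, b). map_pmf (Pair (a, \<kappa> b)) (\<gamma> b)) =
         bind_pmf M (\<lambda>(a, b). map_pmf (Pair (a, \<kappa> b)) (bind_pmf (F (\<kappa> b)) \<gamma>))"
proof -
  define C where "C k = cond_pmf M {p. \<kappa> (snd p) = k}" for k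
  have M_eq: "M = bind_pmf (map_pmf (\<kappa> \<circ> snd) M) C"
    unfolding C_def by (rule bind_cond_pmf_cancel[symmetric]) (auto simp: vimage_def)
  have same: "bind_pmf (C k) (\<lambda>(a, b). map_pmf (Pair (a, \<kappa> b)) (\<gamma> b)) =
      bind_pmf (C k) (\<lambda>(a, b). map_pmf (Pair (a, \<kappa> b)) (bind_pmf (F (\<kappa> b)) \<gamma>))"
    if "k \<in> set_pmf (map_pmf (\<kappa> \<circ> snd) M)" for k
  proof -
    from that obtain a0 b0 where ab0: "(a0, b0) \<in> set_pmf M" "\<kappa> b0 = k" by auto
    then have Ck: "C k = pair_pmf (\<Phi> k) (F k)"
      using cond[OF ab0(1)] by (simp add: C_def)
    have F_supp: "\<kappa> b = k" if "b \<in> set_pmf (F k)" for b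
    proof -
      obtain a where "a \<in> set_pmf (\<Phi> k)" using set_pmf_not_empty[of "\<Phi> k"] by blast
      with that have "(a, b) \<in> set_pmf (C k)" by (simp add: Ck)
      moreover have "set_pmf M \<inter> {p. \<kappa> (snd p) = k} \<noteq> {}" using ab0 by auto
      ultimately show ?thesis by (simp add: C_def)
    qed
    have "bind_pmf (C k) (\<lambda>(a, b). map_pmf (Pair (a, \<kappa> b)) (\<gamma> b)) =
        bind_pmf (\<Phi> k) (\<lambda>a. map_pmf (Pair (a, k)) (bind_pmf (F k) \<gamma>))"
      by (simp add: Ck pair_pmf_def bind_assoc_pmf bind_return_pmf map_bind_pmf F_supp
               cong: bind_pmf_cong)
    also have "\<dots> = bind_pmf (C k) (\<lambda>(a, b). map_pmf (Pair (a, \<kappa> b)) (bind_pmf (F (\<kappa> b)) \<gamma>))"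
      by (simp add: Ck pair_pmf_def bind_assoc_pmf bind_return_pmf F_supp cong: bind_pmf_cong)
    finally show ?thesis .
  qed
  have "bind_pmf M (\<lambda>(a, b). map_pmf (Pair (a, \<kappa> b)) (\<gamma> b)) =
      bind_pmf (map_pmf (\<kappa> \<circ> snd) M) (\<lambda>k. bind_pmf (C k) (\<lambda>(a, b). map_pmf (Pair (a, \<kappa> b)) (\<gamma> b)))"
    by (subst M_eq) (simp add: bind_assoc_pmf)
  also have "\<dots> = bind_pmf (map_pmf (\<kappa> \<circ> snd) M)
      (\<lambda>k. bind_pmf (C k) (\<lambda>(a, b). map_pmf (Pair (a, \<kappa> b)) (bind_pmf (F (\<kappa> b)) \<gamma>)))"
    by (intro bind_pmf_cong refl same)
  also have "\<dots> = bind_pmf M (\<lambda>(a, b). map_pmf (Pair (a, \<kappa> b)) (bind_pmf (F (\<kappa> b)) \<gamma>))"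
    by (subst (2) M_eq) (simp add: bind_assoc_pmf)
  finally show ?thesis .
qed

definition split_own :: "'i \<Rightarrow> 'x \<times> ('i \<Rightarrow> 'v) \<Rightarrow> ('x \<times> ('i \<Rightarrow> 'v)) \<times> 'v" where
  "split_own i p = ((fst p, (snd p)(i := undefined)), snd p i)"

definition kview :: "('i \<Rightarrow> 'h \<Rightarrow> 'k) \<Rightarrow> (nat \<Rightarrow> 'i \<Rightarrow> 'k \<Rightarrow> 'z \<Rightarrow> 'k) \<Rightarrow> 'i
    \<Rightarrow> 'x \<times> ('i \<Rightarrow> ('h,'z) hist) \<times> 'c \<Rightarrow> ('x \<times> ('i \<Rightarrow> ('h,'z) hist)) \<times> 'k" where
  "kview \<iota>0 \<iota> i s = apsnd (compress \<iota>0 \<iota> i) (split_own i (map_prod id fst s))"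

lemma kview_eq:
  "kview \<iota>0 \<iota> i s = ((fst s, (fst (snd s))(i := undefined)), compress \<iota>0 \<iota> i (fst (snd s) i))"
  by (simp add: kview_def split_own_def)

definition own_act_law :: "('i::finite,'x,'h,'u,'z,'w) game \<Rightarrow> ('i,'h,'u,'z) profile
    \<Rightarrow> ('i \<Rightarrow> 'h \<Rightarrow> 'k) \<Rightarrow> (nat \<Rightarrow> 'i \<Rightarrow> 'k \<Rightarrow> 'z \<Rightarrow> 'k) \<Rightarrow> 'i \<Rightarrow> nat
    \<Rightarrow> ((('x \<times> ('i \<Rightarrow> ('h,'z) hist)) \<times> 'k) \<times> 'u) pmf" where
  "own_act_law G g \<iota>0 \<iota> i t =
     bind_pmf (run G g t) (\<lambda>s. map_pmf (Pair (kview \<iota>0 \<iota> i s)) (g i t (fst (snd s) i)))"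

definition joint_act_law :: "('i::finite,'x,'h,'u,'z,'w) game \<Rightarrow> ('i,'h,'u,'z) profile
    \<Rightarrow> ('i \<Rightarrow> 'h \<Rightarrow> 'k) \<Rightarrow> (nat \<Rightarrow> 'i \<Rightarrow> 'k \<Rightarrow> 'z \<Rightarrow> 'k) \<Rightarrow> 'i \<Rightarrow> nat
    \<Rightarrow> ((('x \<times> ('i \<Rightarrow> ('h,'z) hist)) \<times> 'k) \<times> ('i \<Rightarrow> 'u)) pmf" where
  "joint_act_law G g \<iota>0 \<iota> i t =
     bind_pmf (run G g t) (\<lambda>s.
       map_pmf (Pair (kview \<iota>0 \<iota> i s)) (joint_act (\<lambda>j. g j t (fst (snd s) j))))"

definition others_joint_act ::
    "('i,'h,'u,'z) profile \<Rightarrow> 'i \<Rightarrow> nat \<Rightarrow> ('i \<Rightarrow> ('h,'z) hist) \<Rightarrow> ('i \<Rightarrow> 'u) pmf" where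
  "others_joint_act g i t H = Pi_pmf (UNIV - {i}) undefined (\<lambda>j. g j t (H j))"

definition kview_next :: "('i,'x,'h,'u,'z,'w) game \<Rightarrow> (nat \<Rightarrow> 'i \<Rightarrow> 'k \<Rightarrow> 'z \<Rightarrow> 'k) \<Rightarrow> 'i \<Rightarrow> nat
    \<Rightarrow> ('x \<times> ('i \<Rightarrow> ('h,'z) hist)) \<times> 'k \<Rightarrow> ('i \<Rightarrow> 'u) \<Rightarrow> 'w \<Rightarrow> ('x \<times> ('i \<Rightarrow> ('h,'z) hist)) \<times> 'k" where
  "kview_next G \<iota> i t v u w = (case dyn G t (fst (fst v)) u w of (x', z, r) \<Rightarrow>
      ((x', (\<lambda>j. (fst (snd (fst v) j), snd (snd (fst v) j) @ [z j]))(i := undefined)),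
       \<iota> t i (snd v) (z i)))"

lemma joint_act_law_eq_bind_own_act_law:
  fixes G :: "('i::finite, 'x, 'h, 'u, 'z, 'w) game"
  shows "joint_act_law G g \<iota>0 \<iota> i t = bind_pmf (own_act_law G g \<iota>0 \<iota> i t)
     (\<lambda>(v, y). map_pmf (\<lambda>u. (v, u(i := y))) (others_joint_act g i t (snd (fst v))))"
proof -
  have "others_joint_act g i t ((fst (snd s))(i := undefined)) =
          Pi_pmf (UNIV - {i}) undefined (\<lambda>j. g j t (fst (snd s) j))"
    for s :: "'x \<times> ('i \<Rightarrow> ('h,'z) hist) \<times> ('i \<Rightarrow> real)"
    unfolding others_joint_act_def by (rule Pi_pmf_cong) auto
  then show ?thesis
    unfolding joint_act_law_def own_act_law_def
    by (subst joint_act_split[where i = i])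
       (simp add: bind_assoc_pmf map_bind_pmf bind_map_pmf map_pmf_comp kview_eq)
qed

lemma kview_succ_state:
  assumes "s \<in> set_pmf (run G g t)"
  shows "kview \<iota>0 \<iota> i (succ_state G t s u w) = kview_next G \<iota> i t (kview \<iota>0 \<iota> i s) u w"
  using length_hist_run[OF assms, of i]
  by (auto simp: succ_state_def kview_next_def kview_eq compress_snoc split: prod.split)

lemma map_kview_run_Suc:
  fixes G :: "('i::finite, 'x, 'h, 'u, 'z, 'w) game"
  shows "map_pmf (kview \<iota>0 \<iota> i) (run G g (Suc t)) =
    bind_pmf (joint_act_law G g \<iota>0 \<iota> i t) (\<lambda>(v, u). map_pmf (kview_next G \<iota> i t v u) (noise G t))"
  unfolding run_Suc_succ_state joint_act_law_def
  by (auto simp: map_bind_pmf map_pmf_comp bind_assoc_pmf bind_map_pmf kview_succ_state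
           intro!: bind_pmf_cong map_pmf_cong)

definition expected_reward :: "('i,'x,'h,'u,'z,'w) game \<Rightarrow> nat \<Rightarrow> 'i \<Rightarrow> 'x \<Rightarrow> ('i \<Rightarrow> 'u) \<Rightarrow> real" where
  "expected_reward G t j x u =
     measure_pmf.expectation (noise G t) (\<lambda>w. snd (snd (dyn G t x u w)) j)"

text \<open>The accumulated reward is not part of kview, since it may carry information about H_t^i
  beyond K_t^i; payoffs are therefore summed stage by stage.\<close>

lemma expectation_acc_reward_run_Suc:
  fixes G :: "('i::finite, 'x::finite, 'h::finite, 'u::finite, 'z::finite, 'w::finite) game"
  shows "measure_pmf.expectation (run G g (Suc t)) (\<lambda>s. snd (snd s) j) =
     measure_pmf.expectation (run G g t) (\<lambda>s. snd (snd s) j) +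
     measure_pmf.expectation (joint_act_law G g \<iota>0 \<iota> i t)
       (\<lambda>(v, u). expected_reward G t j (fst (fst v)) u)"
proof -
  note integral_add_finite =
    Bochner_Integration.integral_add[OF integrable_measure_pmf_finite integrable_measure_pmf_finite]
  let ?J = "\<lambda>s. joint_act (\<lambda>j. g j t (fst (snd s) j))"
  have "measure_pmf.expectation (run G g (Suc t)) (\<lambda>s. snd (snd s) j) =
      measure_pmf.expectation (run G g t) (\<lambda>s. measure_pmf.expectation (?J s) (\<lambda>u.
        snd (snd s) j + expected_reward G t j (fst s) u))"
    unfolding run_Suc_succ_state
    by (simp add: expectation_bind_pmf_finite finite_set_pmf_run integral_add_finite
                  succ_state_def expected_reward_def split_beta)
  also have "\<dots> = measure_pmf.expectation (run G g t) (\<lambda>s. snd (snd s) j) +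
      measure_pmf.expectation (run G g t) (\<lambda>s. measure_pmf.expectation (?J s) (\<lambda>u.
        expected_reward G t j (fst s) u))"
    by (simp add: integral_add_finite finite_set_pmf_run)
  also have "measure_pmf.expectation (run G g t) (\<lambda>s. measure_pmf.expectation (?J s) (\<lambda>u.
        expected_reward G t j (fst s) u)) =
      measure_pmf.expectation (joint_act_law G g \<iota>0 \<iota> i t)
       (\<lambda>(v, u). expected_reward G t j (fst (fst v)) u)"
    unfolding joint_act_law_def
    by (simp add: expectation_bind_pmf_finite finite_set_pmf_run kview_eq)
  finally show ?thesis .
qed

lemma payoff_eq_sum_expected_reward:
  fixes G :: "('i::finite, 'x::finite, 'h::finite, 'u::finite, 'z::finite, 'w::finite) game"
  shows "payoff G g j = (\<Sum>t<horizon G.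
     measure_pmf.expectation (joint_act_law G g \<iota>0 \<iota> i t)
       (\<lambda>(v, u). expected_reward G t j (fst (fst v)) u))"
proof -
  have "measure_pmf.expectation (run G g n) (\<lambda>s. snd (snd s) j) = (\<Sum>t<n.
     measure_pmf.expectation (joint_act_law G g \<iota>0 \<iota> i t)
       (\<lambda>(v, u). expected_reward G t j (fst (fst v)) u))"
    for n
  proof (induction n)
    case 0
    then show ?case by (simp add: split_beta)
  next
    case (Suc n)
    then show ?case
      by (simp add: expectation_acc_reward_run_Suc[of G g n j \<iota>0 \<iota> i] del: run.simps)
  qed
  then show ?thesis
    by (simp add: payoff_def case_prod_unfold)
qed

lemma cond_pmf_split_own_run:
  fixes G :: "('i::finite, 'x, 'h, 'u, 'z, 'w) game"
  assumes fac: "\<And>x H. cond_XH G g \<iota>0 \<iota> i t k x H = pmf (F k) (H i) *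
      measure_pmf.prob (\<Phi> k) {(x', H'). x' = x \<and> (\<forall>j. j \<noteq> i \<longrightarrow> H' j = H j)}"
    and pos: "prob_K G g \<iota>0 \<iota> i t k > 0"
  shows "cond_pmf (map_pmf (split_own i \<circ> map_prod id fst) (run G g t))
            {p. compress \<iota>0 \<iota> i (snd p) = k} =
         pair_pmf (map_pmf (fst \<circ> split_own i) (\<Phi> k)) (F k)"
    (is "cond_pmf ?M ?A = ?P")
proof (rule pmf_eqI)
  fix p :: "('x \<times> ('i \<Rightarrow> ('h,'z) hist)) \<times> ('h,'z) hist"
  obtain x H h where p: "p = ((x, H), h)" by (metis prod.collapse)
  have measure_A: "measure_pmf.prob ?M ?A = prob_K G g \<iota>0 \<iota> i t k"
    unfolding prob_K_def by (auto simp: split_own_def intro!: arg_cong[where f = "measure _"])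
  then have A_nonempty: "set_pmf ?M \<inter> ?A \<noteq> {}"
    using pos measure_pmf_zero_iff[of ?M ?A] by simp
  show "pmf (cond_pmf ?M ?A) p = pmf ?P p"
  proof (cases "H i = undefined")
    case True
    have "(split_own i \<circ> map_prod id fst) -` {p} = {(x', H', c). x' = x \<and> H' = H(i := h)}"
      using True by (auto simp: p split_own_def fun_eq_iff) metis
    then have pmf_M:
        "pmf ?M p = measure_pmf.prob (run G g t) {(x', H', c). x' = x \<and> H' = H(i := h)}"
      unfolding pmf_map by (rule arg_cong)
    have "pmf (cond_pmf ?M ?A) p = cond_XH G g \<iota>0 \<iota> i t k x (H(i := h))"
    proof (cases "compress \<iota>0 \<iota> i h = k")
      case True
      then have "pmf (cond_pmf ?M ?A) p = pmf ?M p / measure_pmf.prob ?M ?A"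
        by (simp only: pmf_cond[OF A_nonempty]) (simp add: p)
      with True show ?thesis
        by (simp only: pmf_M measure_A cond_XH_def) simp
    next
      case False
      then show ?thesis
        by (simp add: pmf_cond[OF A_nonempty] cond_XH_def p case_prod_unfold)
    qed
    also have "\<dots> = pmf (F k) h * pmf (map_pmf (fst \<circ> split_own i) (\<Phi> k)) (x, H)"
      using True
      by (auto simp: fac pmf_map split_own_def fun_eq_iff intro!: arg_cong[where f = "measure _"])
         metis
    finally show ?thesis
      by (simp add: p pmf_pair)
  next
    case False
    then have "pmf ?M p = 0" and "pmf (map_pmf (fst \<circ> split_own i) (\<Phi> k)) (x, H) = 0"
      by (auto simp: pmf_eq_0_set_pmf p split_own_def)
    then show ?thesis
      by (simp add: pmf_cond[OF A_nonempty] p pmf_pair)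
  qed
qed

lemma own_act_law_eq_mixture:
  assumes fac: "\<And>k x H. prob_K G g \<iota>0 \<iota> i t k > 0 \<Longrightarrow>
      cond_XH G g \<iota>0 \<iota> i t k x H = pmf (F k) (H i) *
        measure_pmf.prob (\<Phi> k) {(x', H'). x' = x \<and> (\<forall>j. j \<noteq> i \<longrightarrow> H' j = H j)}"
  shows "own_act_law G g \<iota>0 \<iota> i t = bind_pmf (map_pmf (kview \<iota>0 \<iota> i) (run G g t))
           (\<lambda>v. map_pmf (Pair v) (bind_pmf (F (snd v)) (g i t)))"
proof -
  let ?M = "map_pmf (split_own i \<circ> map_prod id fst) (run G g t)"
  let ?\<kappa> = "compress \<iota>0 \<iota> i"
  have "prob_K G g \<iota>0 \<iota> i t (?\<kappa> b) > 0" if "(a, b) \<in> set_pmf ?M" for a b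
  proof -
    from that obtain s where "s \<in> set_pmf (run G g t)" "?\<kappa> (fst (snd s) i) = ?\<kappa> b"
      by (auto simp: split_own_def)
    then show ?thesis
      unfolding prob_K_def by (intro measure_pmf_posI) (auto simp: split_beta)
  qed
  then have cond: "cond_pmf ?M {p. ?\<kappa> (snd p) = ?\<kappa> b} =
      pair_pmf (map_pmf (fst \<circ> split_own i) (\<Phi> (?\<kappa> b))) (F (?\<kappa> b))"
    if "(a, b) \<in> set_pmf ?M" for a b
    using that by (intro cond_pmf_split_own_run fac)
  have "own_act_law G g \<iota>0 \<iota> i t = bind_pmf ?M (\<lambda>(a, b). map_pmf (Pair (a, ?\<kappa> b)) (g i t b))"
    by (simp add: own_act_law_def bind_map_pmf kview_def split_own_def)
  also have "\<dots> = bind_pmf ?M (\<lambda>(a, b). map_pmf (Pair (a, ?\<kappa> b)) (bind_pmf (F (?\<kappa> b)) (g i t)))"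
    by (rule bind_pmf_kernel_eq_mixture[OF cond])
  also have "\<dots> = bind_pmf (map_pmf (kview \<iota>0 \<iota> i) (run G g t))
      (\<lambda>v. map_pmf (Pair v) (bind_pmf (F (snd v)) (g i t)))"
    by (simp add: bind_map_pmf kview_def split_own_def)
  finally show ?thesis .
qed

lemma payoff_kstrat_mixture_eq:
  fixes G :: "('i::finite, 'x::finite, 'h::finite, 'u::finite, 'z::finite, 'w::finite) game"
  assumes fac: "\<And>t k x H. t < horizon G \<Longrightarrow> prob_K G g \<iota>0 \<iota> i t k > 0 \<Longrightarrow>
      cond_XH G g \<iota>0 \<iota> i t k x H = pmf (F t k) (H i) *
        measure_pmf.prob (\<Phi> t k) {(x', H'). x' = x \<and> (\<forall>j. j \<noteq> i \<longrightarrow> H' j = H j)}"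
  shows "payoff G (g(i := kstrat \<iota>0 \<iota> i (\<lambda>t k. bind_pmf (F t k) (g i t)))) j = payoff G g j"
proof -
  define \<rho> where "\<rho> = (\<lambda>t k. bind_pmf (F t k) (g i t))"
  define g' where "g' = g(i := kstrat \<iota>0 \<iota> i \<rho>)"
  have own_g: "own_act_law G g \<iota>0 \<iota> i t =
      bind_pmf (map_pmf (kview \<iota>0 \<iota> i) (run G g t)) (\<lambda>v. map_pmf (Pair v) (\<rho> t (snd v)))"
    if "t < horizon G" for t
    unfolding \<rho>_def using that by (intro own_act_law_eq_mixture[where \<Phi> = "\<Phi> t"] fac)
  have own_g': "own_act_law G g' \<iota>0 \<iota> i t =
      bind_pmf (map_pmf (kview \<iota>0 \<iota> i) (run G g' t)) (\<lambda>v. map_pmf (Pair v) (\<rho> t (snd v)))" for t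
    by (simp add: own_act_law_def g'_def kstrat_def bind_map_pmf kview_eq)
  have others: "others_joint_act g' i t = others_joint_act g i t" for t
    unfolding others_joint_act_def g'_def by (intro ext Pi_pmf_cong) auto
  have joint_act_law_eq: "joint_act_law G g' \<iota>0 \<iota> i t = joint_act_law G g \<iota>0 \<iota> i t"
    if "map_pmf (kview \<iota>0 \<iota> i) (run G g' t) = map_pmf (kview \<iota>0 \<iota> i) (run G g t)"
      and "t < horizon G" for t
    using that by (simp add: joint_act_law_eq_bind_own_act_law own_g own_g' others)
  have "map_pmf (kview \<iota>0 \<iota> i) (run G g' t) = map_pmf (kview \<iota>0 \<iota> i) (run G g t)"
    if "t \<le> horizon G" for t
    using that by (induction t) (simp_all add: map_kview_run_Suc joint_act_law_eq del: run.simps(2))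
  then show ?thesis
    unfolding \<rho>_def[symmetric] g'_def[symmetric]
    by (simp add: payoff_eq_sum_expected_reward[of G g' j \<iota>0 \<iota> i]
                  payoff_eq_sum_expected_reward[of G g j \<iota>0 \<iota> i] joint_act_law_eq)
qed

lemma BNE_fun_upd_payoff_equivalent:
  assumes bne: "BNE G g" and beh_s: "behavioral G (g(i := s))"
    and equiv: "\<And>g0 j. behavioral G g0 \<Longrightarrow> g0 i = g i \<Longrightarrow> payoff G (g0(i := s)) j = payoff G g0 j"
  shows "BNE G (g(i := s))"
  unfolding BNE_def
proof (intro conjI allI impI beh_s)
  have beh: "behavioral G g"
    and best: "\<And>j g'. behavioral G (g(j := g')) \<Longrightarrow> payoff G (g(j := g')) j \<le> payoff G g j"
    using bne by (auto simp: BNE_def)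
  fix j g'
  assume dev: "behavioral G (g(i := s, j := g'))"
  show "payoff G (g(i := s, j := g')) j \<le> payoff G (g(i := s)) j"
  proof (cases "j = i")
    case True
    then show ?thesis using dev best equiv[OF beh refl] by simp
  next
    case False
    then have "behavioral G (g(j := g'))"
      using dev beh unfolding behavioral_def by (metis fun_upd_other fun_upd_same)
    moreover have "g(i := s, j := g') = g(j := g', i := s)"
      using False by (intro fun_upd_twist) simp
    ultimately show ?thesis
      using False best equiv[of "g(j := g')" j] equiv[OF beh refl, of j] by simp
  qed
qed

theorem lemma6:
  fixes G :: "('i::finite, 'x::finite, 'h::finite, 'u::finite, 'z::finite, 'w::finite) game"
    and \<iota>0 :: "'i \<Rightarrow> 'h \<Rightarrow> 'k::finite"
    and \<iota> :: "nat \<Rightarrow> 'i \<Rightarrow> 'k \<Rightarrow> 'z \<Rightarrow> 'k"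
    and i :: 'i
    and g :: "('i,'h,'u,'z) profile"
  assumes "valid_game G"
    and "USI G \<iota>0 \<iota> i"
    and "BNE G g"
  shows "\<exists>\<rho>. K_based G i \<rho> \<and>
           BNE G (g(i := kstrat \<iota>0 \<iota> i \<rho>)) \<and>
           (\<forall>j. payoff G (g(i := kstrat \<iota>0 \<iota> i \<rho>)) j = payoff G g j)"
proof -
  obtain F \<Phi> where fac: "\<And>g. behavioral G g \<Longrightarrow>
      \<forall>t k. t < horizon G \<longrightarrow> prob_K G g \<iota>0 \<iota> i t k > 0 \<longrightarrow>
        (\<forall>x H. cond_XH G g \<iota>0 \<iota> i t k x H = pmf (F (g i) t k) (H i) *
          measure_pmf.prob (\<Phi> (g(i := undefined)) t k)
            {(x', H'). x' = x \<and> (\<forall>j. j \<noteq> i \<longrightarrow> H' j = H j)})"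
    using assms(2) unfolding USI_def by blast
  have beh: "behavioral G g"
    using assms(3) by (simp add: BNE_def)
  define \<rho> where "\<rho> = (\<lambda>t k. bind_pmf (F (g i) t k) (g i t))"
  have equiv: "payoff G (g0(i := kstrat \<iota>0 \<iota> i \<rho>)) j = payoff G g0 j"
    if "behavioral G g0" "g0 i = g i" for g0 j
    unfolding \<rho>_def that(2)[symmetric] using fac[OF that(1)]
    by (intro payoff_kstrat_mixture_eq[where \<Phi> = "\<Phi> (g0(i := undefined))"]) auto
  have K: "K_based G i \<rho>"
    using beh by (fastforce simp: K_based_def behavioral_def \<rho>_def)
  then have "behavioral G (g(i := kstrat \<iota>0 \<iota> i \<rho>))"
    using beh by (auto simp: behavioral_def K_based_def kstrat_def)
  then show ?thesis
    using K BNE_fun_upd_payoff_equivalent[OF assms(3)] equiv beh by blast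
qed

end
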